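(* Let $\ell\ge 1$ be an integer and let $D_{2m}=\langle u,v : u^m=e=v^2,\ vu=u^{m-1}v\rangle$ denote the dihedral group of order $2m$. Let $(a_1,\dots,a_{2\ell})$ be a graceful permutation of length $2\ell$ with sequence of absolute differences $(b_1,\dots,b_{2\ell-1})$, and let $(c_1,\dots,c_{2\ell+1})$ be a graceful permutation of length $2\ell+1$ with sequence of absolute differences $(d_1,\dots,d_{2\ell})$. Then: 1. if $a_{2\ell}=\ell$, then $D_{8\ell+2}$ has a sequencing with first element $u^{b_1}$; 2. if $a_1=\ell$ and $a_{2\ell}=\ell-1$, then $D_{8\ell+2}$ has a sequencing with first element $u^{b_1}$ and a sequencing with first element $u^{b_{2\ell-1}}$; 3. if $c_1=\ell$ and $c_{2\ell+1}=\ell-1$, then $D_{8\ell+6}$ has a sequencing with first element $u^{d_1}$ and a sequencing with first element $u^{d_{2\ell}}$.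
   Context: A graceful permutation of length $n$ is an arrangement $(a_1,\dots,a_n)$ of the integers $\{0,1,\dots,n-1\}$ such that its sequence of absolute differences $(|a_2-a_1|,|a_3-a_2|,\dots,|a_n-a_{n-1}|)$ consists of the integers $\{1,\dots,n-1\}$. A sequencing of a finite group $G$ with identity $e$ is an ordering $(g_1,\dots,g_{|G|-1})$ of the elements of $G\setminus\{e\}$ such that the partial products $e, g_1, g_1g_2,\dots,g_1\cdots g_{|G|-1}$ are pairwise distinct. *)

theory Defs
  imports "HOL-Algebra.Group"
begin

definition absdiffs :: "nat list \<Rightarrow> nat list" where
  "absdiffs as = map (\<lambda>i. nat \<bar>int (as ! Suc i) - int (as ! i)\<bar>) [0..<length as - 1]"

text \<open>Graceful permutation of length n (list indices are 0-based: a_i = as ! (i-1)).\<close>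
definition graceful_perm :: "nat \<Rightarrow> nat list \<Rightarrow> bool" where
  "graceful_perm n as \<longleftrightarrow> length as = n \<and> distinct as \<and> set as = {0..<n}
     \<and> distinct (absdiffs as) \<and> set (absdiffs as) = {1..<n}"

definition sequencing :: "('a, 'b) monoid_scheme \<Rightarrow> 'a list \<Rightarrow> bool" where
  "sequencing G gs \<longleftrightarrow> distinct gs \<and> set gs = carrier G - {\<one>\<^bsub>G\<^esub>}
     \<and> distinct (map (\<lambda>k. foldl (\<otimes>\<^bsub>G\<^esub>) \<one>\<^bsub>G\<^esub> (take k gs)) [0..<Suc (length gs)])"

text \<open>Dihedral group of order 2m: the pair (i, s) represents u^i v^s (s = True meaning v^1),
  with u = (1, False), v = (0, True); then u^m = e = v^2 and v u = u^(m-1) v.\<close>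
definition dihedral :: "nat \<Rightarrow> (nat \<times> bool) monoid" where
  "dihedral m = \<lparr> carrier = {0..<m} \<times> UNIV,
     mult = (\<lambda>(i, s) (j, t). ((if s then i + (m - j) else i + j) mod m, s \<noteq> t)),
     one = (0, False) \<rparr>"

definition dih_u :: "nat \<times> bool" where "dih_u = (1, False)"

end

theory Submission
  imports Defs
begin

(* A sequencing of a group G is the same as an ordering e = p_0, p_1, ..., p_(|G|-1) of all of G
   whose quotients p_k^-1 p_(k+1) are pairwise distinct; the quotients are then the sequencing.
   For the dihedral group of order 2m such orderings come from walks through the 2m points (x, s)
   of Z_m x {rotations, reflections}: the point (x, s) stands for u^(+-(x - t)) v^s, so a step
   between two points on the same side has a rotation by the difference of their coordinates as
   quotient, and a step between the two sides a reflection determined by their sum.  A walk that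
   visits every point, uses every nonzero difference on some same-side step and every residue as
   the sum of some cross step therefore gives a sequencing.

   For m = 2n + 1 and a graceful permutation a of length n, running through a on the rotation side
   and backwards through a on the reflection side realises every difference except n and n + 1,
   because the differences of a are exactly 1, ..., n - 1.  The hypotheses on the end values of a
   allow the remaining points n, ..., 2n to be threaded in as a zigzag between the two sides that
   supplies these two differences and all the sums.  The sequencings starting with the last
   difference of a come from the same construction applied to its reverse complement. *)

section \<open>Sequencings from orderings of the group\<close>

lemma sequencing_of_partial_products:
  fixes G (structure) and P g :: "nat \<Rightarrow> 'a"
  defines "N \<equiv> card (carrier G)"
  assumes fin: "finite (carrier G)" and one: "\<one> \<in> carrier G"
    and P0: "P 0 = \<one>"
    and step: "\<And>k. k < N - 1 \<Longrightarrow> P k \<otimes> g k = P (Suc k)"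
    and inj: "inj_on P {..<N}"
    and closed: "g ` {..<N - 1} \<subseteq> carrier G"
    and covers: "carrier G - {\<one>} \<subseteq> g ` {..<N - 1}"
  shows "sequencing G (map g [0..<N - 1])"
proof -
  define gs where "gs = map g [0..<N - 1]"
  have N: "N \<ge> 1"
    using fin one by (auto simp: N_def Suc_le_eq card_gt_0_iff)
  have partial: "foldl (\<otimes>) \<one> (take k gs) = P k" if "k \<le> N - 1" for k
    using that
  proof (induction k)
    case 0
    then show ?case by (simp add: P0)
  next
    case (Suc k)
    then have "take (Suc k) gs = take k gs @ [g k]"
      by (simp add: gs_def take_Suc_conv_app_nth)
    with Suc show ?case by (simp add: step)
  qed
  have one_notin: "\<one> \<notin> g ` {..<N - 1}"
  proof
    assume "\<one> \<in> g ` {..<N - 1}"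
    with covers have "carrier G \<subseteq> g ` {..<N - 1}" by blast
    then have "N \<le> card (g ` {..<N - 1})"
      unfolding N_def by (intro card_mono) auto
    also have "\<dots> \<le> N - 1" using card_image_le[of "{..<N - 1}" g] by simp
    finally show False using N by simp
  qed
  have set_gs: "set gs = carrier G - {\<one>}"
    using closed covers one_notin unfolding gs_def set_map set_upt atLeast0LessThan by blast
  have "card (set gs) = length gs"
    unfolding set_gs using one fin by (simp add: gs_def N_def)
  then have "distinct gs" by (rule card_distinct)
  moreover have "map (\<lambda>k. foldl (\<otimes>) \<one> (take k gs)) [0..<Suc (length gs)] = map P [0..<N]"
    using N partial by (auto simp: gs_def simp del: upt_Suc)
  moreover have "distinct (map P [0..<N])"
    using inj by (simp add: distinct_map atLeast0LessThan)
  ultimately show ?thesis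
    using set_gs unfolding sequencing_def gs_def[symmetric] by (simp del: upt_Suc)
qed

section \<open>The dihedral group with integer exponents\<close>

definition dihedral_elem :: "nat \<Rightarrow> int \<Rightarrow> bool \<Rightarrow> nat \<times> bool" where
  "dihedral_elem m z s = (nat (z mod int m), s)"

lemma dihedral_elem_in_carrier: "0 < m \<Longrightarrow> dihedral_elem m z s \<in> carrier (dihedral m)"
  by (simp add: dihedral_elem_def dihedral_def nat_less_iff)

lemma dihedral_elem_eq_iff:
  "0 < m \<Longrightarrow> dihedral_elem m x s = dihedral_elem m y t \<longleftrightarrow> x mod int m = y mod int m \<and> s = t"
  by (simp add: dihedral_elem_def eq_nat_nat_iff)

lemma dihedral_elem_of_carrier:
  "p \<in> carrier (dihedral m) \<Longrightarrow> p = dihedral_elem m (int (fst p)) (snd p)"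
  by (auto simp: dihedral_def dihedral_elem_def zmod_int)

lemma one_dihedral: "\<one>\<^bsub>dihedral m\<^esub> = dihedral_elem m 0 False"
  by (simp add: dihedral_def dihedral_elem_def)

lemma finite_carrier_dihedral: "finite (carrier (dihedral m))"
  by (simp add: dihedral_def)

lemma card_carrier_dihedral: "card (carrier (dihedral m)) = 2 * m"
  by (simp add: dihedral_def card_cartesian_product)

lemma dihedral_elem_mult:
  assumes "0 < m"
  shows "dihedral_elem m x s \<otimes>\<^bsub>dihedral m\<^esub> dihedral_elem m y t
       = dihedral_elem m (if s then x - y else x + y) (s \<noteq> t)"
proof -
  define a b where "a = nat (x mod int m)" and "b = nat (y mod int m)"
  have a: "int a = x mod int m" and b: "int b = y mod int m" and "b < m"
    using assms by (auto simp: a_def b_def nat_less_iff)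
  have "int ((if s then a + (m - b) else a + b) mod m) = (if s then x - y else x + y) mod int m"
  proof (cases s)
    case True
    have "int ((a + (m - b)) mod m) = (int a - int b + int m) mod int m"
      using \<open>b < m\<close> by (simp add: zmod_int algebra_simps)
    also have "\<dots> = (x - y) mod int m"
      by (simp add: a b mod_diff_eq)
    finally show ?thesis using True by simp
  next
    case False
    then show ?thesis by (simp add: zmod_int a b mod_add_eq)
  qed
  then show ?thesis
    by (simp add: dihedral_def dihedral_elem_def a_def[symmetric] b_def[symmetric] nat_eq_iff)
qed

lemma dih_u_pow: "dih_u [^]\<^bsub>dihedral m\<^esub> k = (k mod m, False)"
  by (induction k) (simp_all add: dihedral_def dih_u_def mod_Suc_eq)

section \<open>Walks through the dihedral group\<close>

definition walk_elem :: "nat \<Rightarrow> int \<Rightarrow> int \<Rightarrow> nat \<times> bool \<Rightarrow> nat \<times> bool" where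
  "walk_elem m \<epsilon> t p =
     dihedral_elem m (if snd p then - (\<epsilon> * (int (fst p) - t)) else \<epsilon> * (int (fst p) - t)) (snd p)"

definition walk_label :: "nat \<Rightarrow> int \<Rightarrow> int \<Rightarrow> nat \<times> bool \<Rightarrow> nat \<times> bool \<Rightarrow> nat \<times> bool" where
  "walk_label m \<epsilon> t p q =
     (if snd p = snd q then dihedral_elem m (\<epsilon> * (int (fst q) - int (fst p))) False
      else dihedral_elem m (- \<epsilon> * (int (fst p) + int (fst q) - 2 * t)) True)"

lemma walk_elem_mult_label:
  "0 < m \<Longrightarrow>
    walk_elem m \<epsilon> t p \<otimes>\<^bsub>dihedral m\<^esub> walk_label m \<epsilon> t p q = walk_elem m \<epsilon> t q"
  by (cases "snd p"; cases "snd q")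
    (simp_all add: walk_elem_def walk_label_def dihedral_elem_mult algebra_simps)

lemma carrier_dihedral_subset_walk_elems:
  assumes "0 < m" "\<epsilon> * \<epsilon> = 1"
  shows "carrier (dihedral m) \<subseteq> walk_elem m \<epsilon> t ` ({0..<m} \<times> UNIV)"
proof
  fix p assume "p \<in> carrier (dihedral m)"
  then obtain i s where p: "p = dihedral_elem m i s"
    using dihedral_elem_of_carrier by blast
  define x where "x = nat ((t + (if s then - \<epsilon> * i else \<epsilon> * i)) mod int m)"
  have "x < m" "int x = (t + (if s then - \<epsilon> * i else \<epsilon> * i)) mod int m"
    using assms by (auto simp: x_def nat_less_iff)
  moreover have "(\<epsilon> * ((t + (if s then - \<epsilon> * i else \<epsilon> * i)) mod int m - t)) mod int m
      = (\<epsilon> * (t + (if s then - \<epsilon> * i else \<epsilon> * i) - t)) mod int m"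
    by (metis mod_diff_left_eq mod_mult_right_eq)
  moreover have "\<epsilon> * (t + (if s then - \<epsilon> * i else \<epsilon> * i) - t) = (if s then - i else i)"
    using assms(2) by (simp flip: mult.assoc)
  ultimately have "(\<epsilon> * (int x - t)) mod int m = (if s then - i else i) mod int m"
    by simp
  then have "(if s then - (\<epsilon> * (int x - t)) else \<epsilon> * (int x - t)) mod int m = i mod int m"
    by (cases s) (auto dest: mod_minus_cong)
  then have "walk_elem m \<epsilon> t (x, s) = p"
    using assms by (cases s) (simp_all add: walk_elem_def p dihedral_elem_eq_iff)
  with \<open>x < m\<close> show "p \<in> walk_elem m \<epsilon> t ` ({0..<m} \<times> UNIV)" by force
qed

lemma walk_label_same_side:
  assumes "snd p = snd q" "(int (fst q) - int (fst p)) mod int m = w mod int m"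
  shows "walk_label m \<epsilon> t p q = dihedral_elem m (\<epsilon> * w) False"
proof -
  have "(\<epsilon> * (int (fst q) - int (fst p))) mod int m = (\<epsilon> * w) mod int m"
    using assms(2) mod_mult_right_eq[of \<epsilon> "int (fst q) - int (fst p)" "int m"]
      mod_mult_right_eq[of \<epsilon> w "int m"] by simp
  then show ?thesis
    using assms(1) by (simp add: walk_label_def dihedral_elem_def)
qed

lemma walk_label_cross:
  assumes "snd p \<noteq> snd q" "(fst p + fst q) mod m = w"
  shows "walk_label m \<epsilon> t p q = dihedral_elem m (- \<epsilon> * (int w - 2 * t)) True"
proof -
  have "(int (fst p) + int (fst q) - 2 * t) mod int m = (int w - 2 * t) mod int m"
    using assms(2) by (metis mod_diff_left_eq of_nat_add zmod_int)
  then have "(- \<epsilon> * (int (fst p) + int (fst q) - 2 * t)) mod int m = (- \<epsilon> * (int w - 2 * t)) mod int m"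
    by (metis mod_mult_right_eq)
  then show ?thesis
    using assms(1) by (simp add: walk_label_def dihedral_elem_def)
qed

definition dihedral_walk :: "nat \<Rightarrow> (nat \<Rightarrow> nat \<times> bool) \<Rightarrow> bool" where
  "dihedral_walk m f \<longleftrightarrow> snd (f 0) = False
     \<and> (\<forall>w<m. \<forall>s. \<exists>k<2*m. f k = (w, s))
     \<and> (\<forall>w\<in>{1..<m}. \<exists>k<2*m - 1. snd (f k) = snd (f (Suc k))
                              \<and> (int (fst (f (Suc k))) - int (fst (f k))) mod int m = int w)
     \<and> (\<forall>w<m. \<exists>k<2*m - 1. snd (f k) \<noteq> snd (f (Suc k)) \<and> (fst (f k) + fst (f (Suc k))) mod m = w)"

lemma dihedral_walk_inj_on_elems:
  assumes walk: "dihedral_walk m f" and "0 < m" and \<epsilon>: "\<epsilon> * \<epsilon> = 1"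
  shows "inj_on (\<lambda>k. walk_elem m \<epsilon> t (f k)) {..<2*m}"
proof (rule eq_card_imp_inj_on)
  have "carrier (dihedral m) \<subseteq> walk_elem m \<epsilon> t ` ({0..<m} \<times> UNIV)"
    using \<open>0 < m\<close> \<epsilon> by (rule carrier_dihedral_subset_walk_elems)
  also have "\<dots> \<subseteq> (\<lambda>k. walk_elem m \<epsilon> t (f k)) ` {..<2*m}"
  proof
    fix p assume "p \<in> walk_elem m \<epsilon> t ` ({0..<m} \<times> UNIV)"
    then obtain w s where "w < m" "p = walk_elem m \<epsilon> t (w, s)" by auto
    moreover obtain k where "k < 2*m" "f k = (w, s)"
      using walk \<open>w < m\<close> unfolding dihedral_walk_def by blast
    ultimately show "p \<in> (\<lambda>k. walk_elem m \<epsilon> t (f k)) ` {..<2*m}"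
      by (metis image_eqI lessThan_iff)
  qed
  finally have "(\<lambda>k. walk_elem m \<epsilon> t (f k)) ` {..<2*m} = carrier (dihedral m)"
    using \<open>0 < m\<close> by (auto simp: walk_elem_def dihedral_elem_in_carrier)
  then show "card ((\<lambda>k. walk_elem m \<epsilon> t (f k)) ` {..<2*m}) = card {..<2*m}"
    by (simp add: card_carrier_dihedral)
qed simp

lemma dihedral_walk_rotation_labels:
  assumes walk: "dihedral_walk m f" and "0 < m" and \<epsilon>: "\<epsilon> * \<epsilon> = 1" and "i mod int m \<noteq> 0"
  shows "dihedral_elem m i False \<in> (\<lambda>k. walk_label m \<epsilon> t (f k) (f (Suc k))) ` {..<2*m - 1}"
proof -
  define w where "w = nat ((\<epsilon> * i) mod int m)"
  have w: "int w = (\<epsilon> * i) mod int m" "w < m"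
    using \<open>0 < m\<close> by (auto simp: w_def nat_less_iff)
  have \<epsilon>w: "(\<epsilon> * int w) mod int m = i mod int m"
    using \<epsilon> mod_mult_right_eq[of \<epsilon> "\<epsilon> * i" "int m"] by (simp add: w flip: mult.assoc)
  have "w \<in> {1..<m}"
    using assms(4) w(2) \<epsilon>w
    by (metis atLeastLessThan_iff less_one linorder_not_le mod_0 mult_zero_right of_nat_0)
  then obtain k where "k < 2*m - 1" "snd (f k) = snd (f (Suc k))"
      "(int (fst (f (Suc k))) - int (fst (f k))) mod int m = int w"
    using walk unfolding dihedral_walk_def by blast
  then have "walk_label m \<epsilon> t (f k) (f (Suc k)) = dihedral_elem m (\<epsilon> * int w) False"
    by (intro walk_label_same_side) (simp_all add: w(1))
  also have "\<dots> = dihedral_elem m i False"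
    using \<epsilon>w by (simp add: dihedral_elem_def)
  finally show ?thesis using \<open>k < 2*m - 1\<close> by force
qed

lemma dihedral_walk_reflection_labels:
  assumes walk: "dihedral_walk m f" and "0 < m" and \<epsilon>: "\<epsilon> * \<epsilon> = 1"
  shows "dihedral_elem m i True \<in> (\<lambda>k. walk_label m \<epsilon> t (f k) (f (Suc k))) ` {..<2*m - 1}"
proof -
  define w where "w = nat ((2 * t - \<epsilon> * i) mod int m)"
  have w: "int w = (2 * t - \<epsilon> * i) mod int m" "w < m"
    using \<open>0 < m\<close> by (auto simp: w_def nat_less_iff)
  have "(- \<epsilon> * (int w - 2 * t)) mod int m = (- \<epsilon> * ((2 * t - \<epsilon> * i) - 2 * t)) mod int m"
    unfolding w(1) by (metis mod_diff_left_eq mod_mult_right_eq)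
  then have label: "dihedral_elem m (- \<epsilon> * (int w - 2 * t)) True = dihedral_elem m i True"
    using \<epsilon> by (simp add: dihedral_elem_def algebra_simps flip: mult.assoc)
  obtain k where "k < 2*m - 1" "snd (f k) \<noteq> snd (f (Suc k))"
      "(fst (f k) + fst (f (Suc k))) mod m = w"
    using walk w(2) unfolding dihedral_walk_def by blast
  then have "walk_label m \<epsilon> t (f k) (f (Suc k)) = dihedral_elem m (- \<epsilon> * (int w - 2 * t)) True"
    by (intro walk_label_cross) simp_all
  also note label
  finally show ?thesis using \<open>k < 2*m - 1\<close> by force
qed

theorem sequencing_of_dihedral_walk:
  assumes walk: "dihedral_walk m f" and "0 < m" and \<epsilon>: "\<epsilon> * \<epsilon> = 1"
  shows "sequencing (dihedral m)
           (map (\<lambda>k. walk_label m \<epsilon> (int (fst (f 0))) (f k) (f (Suc k))) [0..<2*m - 1])"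
proof -
  define t where "t = int (fst (f 0))"
  define g where "g k = walk_label m \<epsilon> t (f k) (f (Suc k))" for k
  have covers: "carrier (dihedral m) - {\<one>\<^bsub>dihedral m\<^esub>} \<subseteq> g ` {..<2*m - 1}"
  proof
    fix p assume p: "p \<in> carrier (dihedral m) - {\<one>\<^bsub>dihedral m\<^esub>}"
    then have p_eq: "p = dihedral_elem m (int (fst p)) (snd p)"
      using dihedral_elem_of_carrier by blast
    show "p \<in> g ` {..<2*m - 1}"
    proof (cases "snd p")
      case True
      have "dihedral_elem m (int (fst p)) True \<in> g ` {..<2*m - 1}"
        unfolding g_def by (rule dihedral_walk_reflection_labels[OF assms])
      with True p_eq show ?thesis by simp
    next
      case False
      then have "int (fst p) mod int m \<noteq> 0"
        using p p_eq \<open>0 < m\<close> by (auto simp: one_dihedral dihedral_elem_eq_iff)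
      then have "dihedral_elem m (int (fst p)) False \<in> g ` {..<2*m - 1}"
        unfolding g_def by (rule dihedral_walk_rotation_labels[OF assms])
      with False p_eq show ?thesis by simp
    qed
  qed
  have "sequencing (dihedral m) (map g [0..<card (carrier (dihedral m)) - 1])"
  proof (rule sequencing_of_partial_products[where P = "\<lambda>k. walk_elem m \<epsilon> t (f k)"])
    show "walk_elem m \<epsilon> t (f 0) = \<one>\<^bsub>dihedral m\<^esub>"
      using walk by (simp add: walk_elem_def t_def one_dihedral dihedral_walk_def)
    show "walk_elem m \<epsilon> t (f k) \<otimes>\<^bsub>dihedral m\<^esub> g k = walk_elem m \<epsilon> t (f (Suc k))" for k
      using \<open>0 < m\<close> by (simp add: g_def walk_elem_mult_label)
    show "g ` {..<card (carrier (dihedral m)) - 1} \<subseteq> carrier (dihedral m)"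
      using \<open>0 < m\<close> by (auto simp: g_def walk_label_def dihedral_elem_in_carrier)
  qed (use dihedral_walk_inj_on_elems[OF assms] covers \<open>0 < m\<close> in
      \<open>simp_all add: card_carrier_dihedral finite_carrier_dihedral one_dihedral
        dihedral_elem_in_carrier\<close>)
  then show ?thesis by (simp add: card_carrier_dihedral g_def[abs_def] t_def)
qed

corollary dihedral_walk_sequencing_head:
  assumes "dihedral_walk m f" "0 < m" "2 \<le> length a"
    and "f 0 = (a ! 0, False)" "f 1 = (a ! 1, False)"
  shows "\<exists>gs. sequencing (dihedral m) gs \<and> hd gs = dih_u [^]\<^bsub>dihedral m\<^esub> (absdiffs a ! 0)"
proof -
  \<comment> \<open>reflecting the walk when the first step goes down makes the first label u^b_1, not u^-b_1\<close>
  define \<epsilon> :: int where "\<epsilon> = (if a ! 0 \<le> a ! 1 then 1 else -1)"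
  define gs where "gs = map (\<lambda>k. walk_label m \<epsilon> (int (fst (f 0))) (f k) (f (Suc k))) [0..<2*m - 1]"
  have "sequencing (dihedral m) gs"
    unfolding gs_def using assms(1,2) by (rule sequencing_of_dihedral_walk) (simp add: \<epsilon>_def)
  moreover have "\<epsilon> * (int (a ! 1) - int (a ! 0)) = int (absdiffs a ! 0)"
    using assms(3) by (simp add: \<epsilon>_def absdiffs_def)
  then have "hd gs = dih_u [^]\<^bsub>dihedral m\<^esub> (absdiffs a ! 0)"
    using assms(2,4,5)
    by (simp add: gs_def upt_rec hd_map walk_label_def dihedral_elem_def dih_u_pow flip: of_nat_mod)
  ultimately show ?thesis by blast
qed

section \<open>Walks built from graceful permutations\<close>

lemma rotation_down: "x = y + (m - w) \<Longrightarrow> w < m \<Longrightarrow> (int y - int x) mod int m = int w"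
proof -
  assume "x = y + (m - w)" "w < m"
  then have "int y - int x = int w - int m" by simp
  then show ?thesis using \<open>w < m\<close> by simp
qed

lemma graceful_perm_length: "graceful_perm n a \<Longrightarrow> length a = n"
  by (simp add: graceful_perm_def)

lemma graceful_perm_nth_less: "graceful_perm n a \<Longrightarrow> i < n \<Longrightarrow> a ! i < n"
  unfolding graceful_perm_def by (metis atLeastLessThan_iff nth_mem)

lemma graceful_perm_value: "graceful_perm n a \<Longrightarrow> w < n \<Longrightarrow> \<exists>i<n. a ! i = w"
  unfolding graceful_perm_def by (metis atLeast0LessThan in_set_conv_nth lessThan_iff)

lemma absdiffs_nth: "i < length a - 1 \<Longrightarrow> absdiffs a ! i = nat \<bar>int (a ! Suc i) - int (a ! i)\<bar>"
  by (simp add: absdiffs_def)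

lemma graceful_perm_difference:
  assumes "graceful_perm n a" "0 < v" "v < n"
  obtains i where "Suc i < n" "a ! Suc i = a ! i + v \<or> a ! i = a ! Suc i + v"
proof -
  have "v \<in> set (absdiffs a)" using assms unfolding graceful_perm_def by auto
  then obtain i where "i < n - 1" "absdiffs a ! i = v"
    using assms(1) by (auto simp: in_set_conv_nth absdiffs_def graceful_perm_length)
  then have "nat \<bar>int (a ! Suc i) - int (a ! i)\<bar> = v"
    using absdiffs_nth assms(1) graceful_perm_length by metis
  then have "a ! Suc i = a ! i + v \<or> a ! i = a ! Suc i + v" by linarith
  with \<open>i < n - 1\<close> show thesis by (intro that[of i]) simp_all
qed

locale two_copies =
  fixes n :: nat and a :: "nat list" and f :: "nat \<Rightarrow> nat \<times> bool"
    and i0 j0 K :: nat and s r :: bool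
  assumes graceful: "graceful_perm n a"
    and forward: "\<And>i. i < n \<Longrightarrow> f (i0 + i) = (a ! i, s)"
    and backward: "\<And>i. i < n \<Longrightarrow> f (j0 + i) = (a ! (n - 1 - i), r)"
    and bounds: "i0 + n \<le> K" "j0 + n \<le> K"
begin

lemma visits:
  assumes "w < n"
  shows "\<exists>k<K. f k = (w, s)" and "\<exists>k<K. f k = (w, r)"
proof -
  obtain i where "i < n" "a ! i = w"
    using graceful_perm_value[OF graceful assms] by blast
  moreover have "i0 + i < K" "j0 + (n - 1 - i) < K" "n - 1 - (n - 1 - i) = i"
    using \<open>i < n\<close> bounds by simp_all
  moreover have "f (i0 + i) = (w, s)" "f (j0 + (n - 1 - i)) = (w, r)"
    using forward[of i] backward[of "n - 1 - i"] \<open>i < n\<close> \<open>a ! i = w\<close> by simp_all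
  ultimately show "\<exists>k<K. f k = (w, s)" and "\<exists>k<K. f k = (w, r)"
    by blast+
qed

(* A step of a that goes down by v goes up by v in the reversed copy. *)
lemma steps:
  assumes "0 < v" "v < n"
  shows "\<exists>k<K - 1. snd (f k) = snd (f (Suc k)) \<and> fst (f (Suc k)) = fst (f k) + v"
    and "\<exists>k<K - 1. snd (f k) = snd (f (Suc k)) \<and> fst (f k) = fst (f (Suc k)) + v"
proof -
  obtain i where i: "Suc i < n" "a ! Suc i = a ! i + v \<or> a ! i = a ! Suc i + v"
    using graceful_perm_difference[OF graceful assms] .
  define k where "k = j0 + (n - 2 - i)"
  have forward_step: "f (i0 + i) = (a ! i, s)" "f (Suc (i0 + i)) = (a ! Suc i, s)"
    using forward[of i] forward[of "Suc i"] i(1) by simp_all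
  have backward_step: "f k = (a ! Suc i, r)" "f (Suc k) = (a ! i, r)"
    using backward[of "n - 2 - i"] backward[of "n - 1 - i"] i(1)
    by (simp_all add: k_def Suc_diff_Suc numeral_2_eq_2)
  have "i0 + i < K - 1" "k < K - 1" using i(1) bounds by (simp_all add: k_def)
  then show "\<exists>k<K - 1. snd (f k) = snd (f (Suc k)) \<and> fst (f (Suc k)) = fst (f k) + v"
    and "\<exists>k<K - 1. snd (f k) = snd (f (Suc k)) \<and> fst (f k) = fst (f (Suc k)) + v"
    using i(2) forward_step backward_step by force+
qed

lemma rotations:
  assumes "w \<in> {1..<m}" "w < n \<or> m < w + n"
  shows "\<exists>k<K - 1. snd (f k) = snd (f (Suc k))
           \<and> (int (fst (f (Suc k))) - int (fst (f k))) mod int m = int w"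
  using assms(2)
proof
  assume "w < n"
  then show ?thesis
    using steps(1)[of w] assms(1) by fastforce
next
  assume "m < w + n"
  then show ?thesis
    using steps(2)[of "m - w"] assms(1) rotation_down by fastforce
qed

end

(* a on the rotation side, a backwards on the reflection side (ending at a_1 = p), then each of
   p + n, ..., 2n first on the reflection and then on the rotation side, and finally each of
   n, ..., n + p - 1 first on the rotation and then on the reflection side. *)
definition walk_of_adjacent_ends :: "nat \<Rightarrow> nat \<Rightarrow> nat list \<Rightarrow> nat \<Rightarrow> nat \<times> bool" where
  "walk_of_adjacent_ends n p a k =
     (if k < n then (a ! k, False)
      else if k < 2*n then (a ! (2*n - 1 - k), True)
      else if k < 4*n + 2 - 2*p then (p + n + (k - 2*n) div 2, even (k - 2*n))
      else (n + (k - (4*n + 2 - 2*p)) div 2, odd (k - (4*n + 2 - 2*p))))"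

lemma div2_add_Suc_div2: "(j::nat) div 2 + Suc j div 2 = j"
  by presburger

locale graceful_adjacent_ends =
  fixes n p :: nat and a :: "nat list"
  assumes graceful: "graceful_perm n a" and n: "2 \<le> n"
    and first: "a ! 0 = p" and last: "a ! (n - 1) + 1 = p"
begin

abbreviation (input) W where "W \<equiv> walk_of_adjacent_ends n p a"

lemma first_bounds: "1 \<le> p" "p < n"
  using last first graceful_perm_nth_less[OF graceful, of 0] n by auto

lemma forward: "i < n \<Longrightarrow> W i = (a ! i, False)"
  by (simp add: walk_of_adjacent_ends_def)

lemma backward: "i < n \<Longrightarrow> W (n + i) = (a ! (n - 1 - i), True)"
  by (simp add: walk_of_adjacent_ends_def)

interpretation copies: two_copies n a W 0 n "2*(2*n + 1)" False True
  by unfold_locales (simp_all add: graceful forward backward)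

lemma upper:
  "j < 2*n + 2 - 2*p \<Longrightarrow> W (2*n + j) = (p + n + j div 2, even j)"
  using first_bounds by (simp add: walk_of_adjacent_ends_def)

lemma lower: "W (4*n + 2 - 2*p + j) = (n + j div 2, odd j)"
proof -
  have "\<not> 4*n + 2 - 2*p + j < n" "\<not> 4*n + 2 - 2*p + j < 2*n"
    "\<not> 4*n + 2 - 2*p + j < 4*n + 2 - 2*p" "4*n + 2 - 2*p + j - (4*n + 2 - 2*p) = j"
    using first_bounds by auto
  then show ?thesis unfolding walk_of_adjacent_ends_def by presburger
qed

lemma visits:
  assumes "w < 2*n + 1"
  shows "\<exists>k<2*(2*n + 1). W k = (w, s)"
proof -
  consider "w < n" | "p + n \<le> w" | "n \<le> w" "w < p + n" by linarith
  then show ?thesis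
  proof cases
    case 1
    then show ?thesis using copies.visits by (cases s) simp_all
  next
    case 2
    define x where "x = w - p - n"
    define k where "k = 2*n + (if s then 2*x else 2*x + 1)"
    have "w = p + n + x" "2*x + 1 < 2*n + 2 - 2*p" using 2 assms by (auto simp: x_def)
    then have "W k = (w, s)" "k < 2*(2*n + 1)"
      using upper[of "2*x"] upper[of "2*x + 1"] by (auto simp: k_def)
    then show ?thesis by blast
  next
    case 3
    define x where "x = w - n"
    define k where "k = 4*n + 2 - 2*p + (if s then 2*x + 1 else 2*x)"
    have "w = n + x" "2*x + 1 < 2*p" using 3 by (auto simp: x_def)
    have "W k = (w, s)"
      using lower[of "if s then 2*x + 1 else 2*x"] \<open>w = n + x\<close> by (simp add: k_def)
    moreover have "k < 2*(2*n + 1)"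
      using \<open>2*x + 1 < 2*p\<close> first_bounds by (auto simp: k_def)
    ultimately show ?thesis by blast
  qed
qed

lemma rotations:
  assumes w: "w \<in> {1..<2*n + 1}"
  shows "\<exists>k<2*(2*n + 1) - 1. snd (W k) = snd (W (Suc k))
           \<and> (int (fst (W (Suc k))) - int (fst (W k))) mod int (2*n + 1) = int w"
proof -
  consider "w < n \<or> 2*n + 1 < w + n" | "w = n" | "w = n + 1" using w by linarith
  then show ?thesis
  proof cases
    case 1
    then show ?thesis using copies.rotations[OF w] by simp
  next
    case 2
    have "W (2*n - 1) = (p, True)" "W (Suc (2*n - 1)) = (p + n, True)"
      using backward[of "n - 1"] upper[of 0] n first first_bounds
      by (simp_all add: mult_2 Suc_diff_Suc)
    then have "snd (W (2*n - 1)) = snd (W (Suc (2*n - 1)))"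
      "(int (fst (W (Suc (2*n - 1)))) - int (fst (W (2*n - 1)))) mod int (2*n + 1) = int w"
      using 2 by simp_all
    moreover have "2*n - 1 < 2*(2*n + 1) - 1" by simp
    ultimately show ?thesis by blast
  next
    case 3
    define k where "k = 2*n + (2*(n - p) + 1)"
    have "W k = (2*n, False)"
      unfolding k_def using upper[of "2*(n - p) + 1"] first_bounds by simp
    moreover have "Suc k = 4*n + 2 - 2*p + 0" unfolding k_def using first_bounds by simp
    then have "W (Suc k) = (n, False)" using lower[of 0] by simp
    moreover have "k < 2*(2*n + 1) - 1" unfolding k_def using first_bounds by simp
    ultimately have "snd (W k) = snd (W (Suc k))"
      "(int (fst (W (Suc k))) - int (fst (W k))) mod int (2*n + 1) = int w"
      using 3 rotation_down[of "2*n" n "2*n + 1" w] n by simp_all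
    with \<open>k < 2*(2*n + 1) - 1\<close> show ?thesis by blast
  qed
qed

lemma upper_cross:
  assumes "j < 2*n + 1 - 2*p"
  shows "snd (W (2*n + j)) \<noteq> snd (W (Suc (2*n + j)))
         \<and> fst (W (2*n + j)) + fst (W (Suc (2*n + j))) = 2*n + (2*p + j)"
  using upper[of j] upper[of "Suc j"] assms
    div2_add_Suc_div2[of j] by simp

lemma lower_cross:
  "snd (W (4*n + 2 - 2*p + j)) \<noteq> snd (W (Suc (4*n + 2 - 2*p + j)))
   \<and> fst (W (4*n + 2 - 2*p + j)) + fst (W (Suc (4*n + 2 - 2*p + j))) = 2*n + j"
  using lower[of j] lower[of "Suc j"]
    div2_add_Suc_div2[of j] by simp

lemma reflections:
  assumes w: "w < 2*n + 1"
  shows "\<exists>k<2*(2*n + 1) - 1. snd (W k) \<noteq> snd (W (Suc k))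
           \<and> (fst (W k) + fst (W (Suc k))) mod (2*n + 1) = w"
proof -
  have wrap: "(2*n + (w + 1)) mod (2*n + 1) = w" if "w < 2*n" for w :: nat
    using that by (simp add: mod_if)
  consider "w = 2*n" | "w + 3 \<le> 2*p" | "w + 2 = 2*p" | "2*p \<le> w + 1" "w < 2*n"
    using w by linarith
  then show ?thesis
  proof cases
    case 1
    then show ?thesis
      using lower_cross[of 0] first_bounds
      by (intro exI[of _ "4*n + 2 - 2*p"]) simp
  next
    case 2
    then show ?thesis
      using lower_cross[of "w + 1"] wrap[of w] first_bounds
      by (intro exI[of _ "4*n + 2 - 2*p + (w + 1)"]) simp
  next
    case 3
    have "W (n - 1) = (p - 1, False)" "W (Suc (n - 1)) = (p - 1, True)"
      using forward[of "n - 1"] backward[of 0] last n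
      by simp_all
    then show ?thesis
      using 3 first_bounds by (intro exI[of _ "n - 1"]) auto
  next
    case 4
    then show ?thesis
      using upper_cross[of "w + 1 - 2*p"] wrap[of w] first_bounds
      by (intro exI[of _ "2*n + (w + 1 - 2*p)"]) simp
  qed
qed

lemma dihedral_walk: "dihedral_walk (2*n + 1) W"
  unfolding dihedral_walk_def using visits rotations reflections forward[of 0] n by simp

end

(* a on the rotation side, then a zigzag between the two sides that descends cyclically through
   n, ..., 2n from n + e back to n + e, and finally a backwards on the reflection side. *)
definition walk_of_central_end :: "nat \<Rightarrow> nat \<Rightarrow> nat list \<Rightarrow> nat \<Rightarrow> nat \<times> bool" where
  "walk_of_central_end n e a k =
     (if k < n then (a ! k, False)
      else if k < 3*n + 2 then
        (n + (if Suc (k - n) div 2 \<le> e then e - Suc (k - n) div 2 else e + n + 1 - Suc (k - n) div 2),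
         odd (k - n))
      else (a ! (4*n + 1 - k), True))"

locale graceful_central_end =
  fixes n e :: nat and a :: "nat list"
  assumes graceful: "graceful_perm n a" and n: "n = 2*e" and e: "1 \<le> e"
    and last: "a ! (n - 1) = e"
begin

abbreviation (input) C where "C \<equiv> walk_of_central_end n e a"

lemma forward: "i < n \<Longrightarrow> C i = (a ! i, False)"
  by (simp add: walk_of_central_end_def)

lemma backward: "i < n \<Longrightarrow> C (3*n + 2 + i) = (a ! (n - 1 - i), True)"
  by (simp add: walk_of_central_end_def)

interpretation copies: two_copies n a C 0 "3*n + 2" "2*(2*n + 1)" False True
  by (intro two_copies.intro graceful backward) (simp_all add: forward)

lemma middle_even:
  "i \<le> n \<Longrightarrow> C (n + 2*i) = (n + (if i \<le> e then e - i else e + n + 1 - i), False)"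
  by (simp add: walk_of_central_end_def)

lemma middle_odd:
  "i \<le> n \<Longrightarrow> C (n + (2*i + 1)) = (n + (if i + 1 \<le> e then e - 1 - i else e + n - i), True)"
  by (simp add: walk_of_central_end_def)

lemma visits:
  assumes "w < 2*n + 1"
  shows "\<exists>k<2*(2*n + 1). C k = (w, s)"
proof (cases "w < n")
  case True
  then show ?thesis using copies.visits by (cases s) simp_all
next
  case False
  define v where "v = w - n"
  have v: "w = n + v" "v \<le> n" using False assms by (auto simp: v_def)
  show ?thesis
  proof (cases s)
    case True
    define i where "i = (if v < e then e - 1 - v else e + n - v)"
    have "i \<le> n" "(if i + 1 \<le> e then e - 1 - i else e + n - i) = v"
      using v n by (auto simp: i_def)
    then have "C (n + (2*i + 1)) = (w, s)" "n + (2*i + 1) < 2*(2*n + 1)"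
      using middle_odd[of i] v True by simp_all
    then show ?thesis by blast
  next
    case False
    define i where "i = (if v \<le> e then e - v else e + n + 1 - v)"
    have "i \<le> n" "(if i \<le> e then e - i else e + n + 1 - i) = v"
      using v n by (auto simp: i_def)
    then have "C (n + 2*i) = (w, s)" "n + 2*i < 2*(2*n + 1)"
      using middle_even[of i] v False by simp_all
    then show ?thesis by blast
  qed
qed

lemma rotations:
  assumes w: "w \<in> {1..<2*n + 1}"
  shows "\<exists>k<2*(2*n + 1) - 1. snd (C k) = snd (C (Suc k))
           \<and> (int (fst (C (Suc k))) - int (fst (C k))) mod int (2*n + 1) = int w"
proof -
  consider "w < n \<or> 2*n + 1 < w + n" | "w = n" | "w = n + 1" using w by linarith
  then show ?thesis
  proof cases
    case 1
    then show ?thesis using copies.rotations[OF w] by simp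
  next
    case 2
    have "C (n - 1) = (e, False)" "C (Suc (n - 1)) = (n + e, False)"
      using forward[of "n - 1"] middle_even[of 0] last n e
      by simp_all
    then have "snd (C (n - 1)) = snd (C (Suc (n - 1)))"
      "(int (fst (C (Suc (n - 1)))) - int (fst (C (n - 1)))) mod int (2*n + 1) = int w"
      using 2 by simp_all
    moreover have "n - 1 < 2*(2*n + 1) - 1" by simp
    ultimately show ?thesis by blast
  next
    case 3
    define k where "k = n + (2*n + 1)"
    have "C k = (n + e, True)"
      using middle_odd[of n] n e by (simp add: k_def)
    moreover have "C (Suc k) = (e, True)"
      using backward[of 0] last n e by (simp add: k_def)
    ultimately have "snd (C k) = snd (C (Suc k))"
      "(int (fst (C (Suc k))) - int (fst (C k))) mod int (2*n + 1) = int w"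
      using 3 rotation_down[of "n + e" e "2*n + 1" w] n e by simp_all
    moreover have "k < 2*(2*n + 1) - 1" using n e by (simp add: k_def)
    ultimately show ?thesis by blast
  qed
qed

lemma middle_cross:
  assumes j: "j \<le> 2*n"
  shows "snd (C (n + j)) \<noteq> snd (C (Suc (n + j)))
     \<and> fst (C (n + j)) + fst (C (Suc (n + j)))
         = 2*n + (if j < n then n - 1 - j else if j = n then n else 3*n + 1 - j)"
proof (cases "even j")
  case True
  then obtain i where i: "j = 2*i" by blast
  have "C (n + j) = (n + (if i \<le> e then e - i else e + n + 1 - i), False)"
    using middle_even[of i] i j by simp
  moreover have "C (Suc (n + j)) = (n + (if i + 1 \<le> e then e - 1 - i else e + n - i), True)"
    using middle_odd[of i] i j by simp
  ultimately show ?thesis using i n j by auto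
next
  case False
  then obtain i where i: "j = 2*i + 1" by (metis oddE)
  have "C (n + j) = (n + (if i + 1 \<le> e then e - 1 - i else e + n - i), True)"
    using middle_odd[of i] i j by simp
  moreover have "Suc (n + j) = n + 2*(i + 1)" using i by simp
  then have "C (Suc (n + j)) = (n + (if i + 1 \<le> e then e - (i + 1) else e + n + 1 - (i + 1)), False)"
    using middle_even[of "i + 1"] i j by simp
  moreover have "j \<noteq> n" using i n by presburger
  ultimately show ?thesis using i n j by auto
qed

lemma reflections:
  assumes w: "w < 2*n + 1"
  shows "\<exists>k<2*(2*n + 1) - 1. snd (C k) \<noteq> snd (C (Suc k))
           \<and> (fst (C k) + fst (C (Suc k))) mod (2*n + 1) = w"
proof -
  define j where "j = (if w = 2*n then n - 1 else if w + 2 \<le> n then n - 2 - w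
                       else if w + 1 = n then n else 3*n - w)"
  have j: "j \<le> 2*n" using w by (auto simp: j_def)
  have "(if j < n then n - 1 - j else if j = n then n else 3*n + 1 - j) = (if w = 2*n then 0 else w + 1)"
    using w n e by (auto simp: j_def)
  then have "(2*n + (if j < n then n - 1 - j else if j = n then n else 3*n + 1 - j)) mod (2*n + 1) = w"
    using w by (auto simp: mod_if)
  then show ?thesis
    using middle_cross[OF j] j by (intro exI[of _ "n + j"]) simp
qed

lemma dihedral_walk: "dihedral_walk (2*n + 1) C"
  unfolding dihedral_walk_def using visits rotations reflections forward[of 0] n e by simp

end

corollary sequencing_of_adjacent_ends:
  assumes "graceful_perm n a" "2 \<le> n" "a ! (n - 1) + 1 = a ! 0"
  shows "\<exists>gs. sequencing (dihedral (2*n + 1)) gs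
           \<and> hd gs = dih_u [^]\<^bsub>dihedral (2*n + 1)\<^esub> (absdiffs a ! 0)"
proof -
  interpret graceful_adjacent_ends n "a ! 0" a
    using assms by unfold_locales simp_all
  show ?thesis
    using graceful_perm_length[OF assms(1)] assms(2) forward[of 0] forward[of 1]
    by (intro dihedral_walk_sequencing_head[OF dihedral_walk]) simp_all
qed

corollary sequencing_of_central_end:
  assumes "graceful_perm (2*e) a" "1 \<le> e" "a ! (2*e - 1) = e"
  shows "\<exists>gs. sequencing (dihedral (4*e + 1)) gs
           \<and> hd gs = dih_u [^]\<^bsub>dihedral (4*e + 1)\<^esub> (absdiffs a ! 0)"
proof -
  interpret graceful_central_end "2*e" e a
    using assms by unfold_locales simp_all
  have walk: "dihedral_walk (4*e + 1) (walk_of_central_end (2*e) e a)"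
    using dihedral_walk by simp
  show ?thesis
    using graceful_perm_length[OF assms(1)] assms(2) forward[of 0] forward[of 1]
    by (intro dihedral_walk_sequencing_head[OF walk]) simp_all
qed

definition rev_compl :: "nat \<Rightarrow> nat list \<Rightarrow> nat list" where
  "rev_compl n a = map (\<lambda>x. n - 1 - x) (rev a)"

lemma rev_compl_nth: "length a = n \<Longrightarrow> i < n \<Longrightarrow> rev_compl n a ! i = n - 1 - a ! (n - 1 - i)"
  by (simp add: rev_compl_def rev_nth)

lemma absdiffs_rev_compl:
  assumes g: "graceful_perm n a"
  shows "absdiffs (rev_compl n a) = rev (absdiffs a)"
proof (rule nth_equalityI)
  have l: "length a = n" using g by (rule graceful_perm_length)
  show "length (absdiffs (rev_compl n a)) = length (rev (absdiffs a))"
    by (simp add: absdiffs_def rev_compl_def)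
  fix i assume "i < length (absdiffs (rev_compl n a))"
  then have i: "i < n - 1" by (simp add: absdiffs_def rev_compl_def l)
  have "a ! (n - 2 - i) < n" "a ! (n - 1 - i) < n" "Suc (n - 2 - i) = n - 1 - i"
    using graceful_perm_nth_less[OF g] i by auto
  have "length (rev_compl n a) = n" by (simp add: rev_compl_def l)
  then have "absdiffs (rev_compl n a) ! i
      = nat \<bar>int (n - 1 - a ! (n - 2 - i)) - int (n - 1 - a ! (n - 1 - i))\<bar>"
    using i l by (simp add: absdiffs_nth rev_compl_nth numeral_2_eq_2 Suc_diff_Suc)
  also have "\<dots> = nat \<bar>int (a ! Suc (n - 2 - i)) - int (a ! (n - 2 - i))\<bar>"
    using \<open>a ! (n - 2 - i) < n\<close> \<open>a ! (n - 1 - i) < n\<close> \<open>Suc (n - 2 - i) = n - 1 - i\<close>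
    by simp
  also have "\<dots> = absdiffs a ! (n - 2 - i)"
    using absdiffs_nth[of "n - 2 - i" a] i l by simp
  also have "\<dots> = rev (absdiffs a) ! i"
    using i l by (simp add: rev_nth absdiffs_def numeral_2_eq_2)
  finally show "absdiffs (rev_compl n a) ! i = rev (absdiffs a) ! i" .
qed

lemma graceful_perm_rev_compl:
  assumes g: "graceful_perm n a"
  shows "graceful_perm n (rev_compl n a)"
proof -
  have "bij_betw (\<lambda>x. n - 1 - x) {0..<n} {0..<n}"
    by (rule bij_betw_byWitness[where f' = "\<lambda>x. n - 1 - x"]) auto
  then show ?thesis
    using g absdiffs_rev_compl[OF g]
    by (auto simp: graceful_perm_def rev_compl_def distinct_map bij_betw_def inj_on_subset)
qed

corollary sequencing_of_adjacent_ends_last: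
  assumes g: "graceful_perm n a" and n: "2 \<le> n" and ends: "a ! (n - 1) + 1 = a ! 0"
  shows "\<exists>gs. sequencing (dihedral (2*n + 1)) gs
           \<and> hd gs = dih_u [^]\<^bsub>dihedral (2*n + 1)\<^esub> (absdiffs a ! (n - 2))"
proof -
  have l: "length a = n" using g by (rule graceful_perm_length)
  have "a ! 0 < n" "a ! (n - 1) < n" using graceful_perm_nth_less[OF g] n by auto
  then have "rev_compl n a ! (n - 1) + 1 = rev_compl n a ! 0"
    using ends n by (simp add: rev_compl_nth[OF l])
  moreover have "absdiffs (rev_compl n a) ! 0 = absdiffs a ! (n - 2)"
    using absdiffs_rev_compl[OF g] l n by (simp add: rev_nth absdiffs_def numeral_2_eq_2)
  ultimately show ?thesis
    using sequencing_of_adjacent_ends[OF graceful_perm_rev_compl[OF g] n] by simp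
qed

theorem lemma4p8:
  fixes l :: nat and as cs :: "nat list"
  assumes "l \<ge> 1"
    and "graceful_perm (2*l) as"
    and "graceful_perm (2*l+1) cs"
  shows "(as ! (2*l - 1) = l \<longrightarrow>
           (\<exists>gs. sequencing (dihedral (4*l+1)) gs \<and>
                 hd gs = dih_u [^]\<^bsub>dihedral (4*l+1)\<^esub> (absdiffs as ! 0)))
       \<and> (as ! 0 = l \<and> as ! (2*l - 1) = l - 1 \<longrightarrow>
           (\<exists>gs. sequencing (dihedral (4*l+1)) gs \<and>
                 hd gs = dih_u [^]\<^bsub>dihedral (4*l+1)\<^esub> (absdiffs as ! 0))
         \<and> (\<exists>gs. sequencing (dihedral (4*l+1)) gs \<and>
                 hd gs = dih_u [^]\<^bsub>dihedral (4*l+1)\<^esub> (absdiffs as ! (2*l - 2))))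
       \<and> (cs ! 0 = l \<and> cs ! (2*l) = l - 1 \<longrightarrow>
           (\<exists>gs. sequencing (dihedral (4*l+3)) gs \<and>
                 hd gs = dih_u [^]\<^bsub>dihedral (4*l+3)\<^esub> (absdiffs cs ! 0))
         \<and> (\<exists>gs. sequencing (dihedral (4*l+3)) gs \<and>
                 hd gs = dih_u [^]\<^bsub>dihedral (4*l+3)\<^esub> (absdiffs cs ! (2*l - 1))))"
proof -
  have m: "2*(2*l) + 1 = 4*l + 1" "2*(2*l + 1) + 1 = 4*l + 3" by simp_all
  have n: "2 \<le> 2*l" "2 \<le> 2*l + 1" "2*l + 1 - 2 = 2*l - 1"
    using assms(1) by simp_all
  have ends_as: "as ! (2*l - 1) + 1 = as ! 0" if "as ! 0 = l \<and> as ! (2*l - 1) = l - 1"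
    using that assms(1) by simp
  have ends_cs: "cs ! (2*l + 1 - 1) + 1 = cs ! 0" if "cs ! 0 = l \<and> cs ! (2*l) = l - 1"
    using that assms(1) by simp
  show ?thesis
    using sequencing_of_central_end[OF assms(2,1)]
      sequencing_of_adjacent_ends[OF assms(2) n(1) ends_as]
      sequencing_of_adjacent_ends_last[OF assms(2) n(1) ends_as]
      sequencing_of_adjacent_ends[OF assms(3) n(2) ends_cs]
      sequencing_of_adjacent_ends_last[OF assms(3) n(2) ends_cs]
    unfolding m n(3) by blast
qed

end
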